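(* Let $G$ be a network whose underlying simple graph is a cactus. Then $R_G(q)$ is Schur quasi-stable, i.e. every complex zero $q$ of $R_G$ satisfies $|q|\le1$.
   Context: A network is a finite connected loopless multigraph, possibly with multiple edges. $R_G(q)$ is the probability that deleting each edge independently with probability $q$ leaves a connected spanning subgraph; it is a polynomial in $q$. The underlying simple graph has the same vertices and one edge for each adjacent pair. A cactus is a connected simple graph in which each edge lies in at most one cycle. *)

theory Defs
  imports "HOL-Computational_Algebra.Polynomial" Complex_Main
begin

text \<open>A network: finite nonempty vertex set V, finite edge set E (edges are abstract
  objects, so parallel edges are allowed), and an endpoint map ends assigning to each
  edge a set of exactly two distinct vertices of V (so no loops).\<close>

definition multigraph :: "'v set \<Rightarrow> 'e set \<Rightarrow> ('e \<Rightarrow> 'v set) \<Rightarrow> bool" where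
  "multigraph V E ends \<longleftrightarrow> finite V \<and> V \<noteq> {} \<and> finite E \<and>
     (\<forall>e\<in>E. ends e \<subseteq> V \<and> card (ends e) = 2)"

definition edge_rel :: "'e set \<Rightarrow> ('e \<Rightarrow> 'v set) \<Rightarrow> ('v \<times> 'v) set" where
  "edge_rel S ends = {(u, v). \<exists>e\<in>S. ends e = {u, v}}"

definition spanning_connected :: "'v set \<Rightarrow> 'e set \<Rightarrow> ('e \<Rightarrow> 'v set) \<Rightarrow> bool" where
  "spanning_connected V S ends \<longleftrightarrow> (\<forall>u\<in>V. \<forall>v\<in>V. (u, v) \<in> (edge_rel S ends)\<^sup>*)"

definition network :: "'v set \<Rightarrow> 'e set \<Rightarrow> ('e \<Rightarrow> 'v set) \<Rightarrow> bool" where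
  "network V E ends \<longleftrightarrow> multigraph V E ends \<and> spanning_connected V E ends"

text \<open>All-terminal reliability polynomial: each edge is deleted independently with
  probability q; R(q) = sum over connected spanning edge subsets S of
  (1-q)^|S| q^|E - S|.\<close>
definition reliability_poly :: "'v set \<Rightarrow> 'e set \<Rightarrow> ('e \<Rightarrow> 'v set) \<Rightarrow> complex poly" where
  "reliability_poly V E ends =
     (\<Sum>S\<in>{S. S \<subseteq> E \<and> spanning_connected V S ends}.
        [:1, -1:] ^ card S * [:0, 1:] ^ card (E - S))"

definition adj :: "'e set \<Rightarrow> ('e \<Rightarrow> 'v set) \<Rightarrow> 'v \<Rightarrow> 'v \<Rightarrow> bool" where
  "adj E ends u v \<longleftrightarrow> u \<noteq> v \<and> (\<exists>e\<in>E. ends e = {u, v})"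

definition is_cycle :: "'e set \<Rightarrow> ('e \<Rightarrow> 'v set) \<Rightarrow> 'v list \<Rightarrow> bool" where
  "is_cycle E ends vs \<longleftrightarrow> length vs \<ge> 3 \<and> distinct vs \<and>
     (\<forall>i<length vs. adj E ends (vs ! i) (vs ! ((i + 1) mod length vs)))"

definition cycle_edges :: "'v list \<Rightarrow> 'v set set" where
  "cycle_edges vs = {{vs ! i, vs ! ((i + 1) mod length vs)} | i. i < length vs}"

text \<open>Cactus: connected simple graph in which every edge lies in at most one cycle.\<close>
definition underlying_is_cactus :: "'v set \<Rightarrow> 'e set \<Rightarrow> ('e \<Rightarrow> 'v set) \<Rightarrow> bool" where
  "underlying_is_cactus V E ends \<longleftrightarrow>
     (\<forall>u\<in>V. \<forall>v\<in>V. (u, v) \<in> {(x, y). adj E ends x y}\<^sup>*) \<and>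
     (\<forall>c1 c2 x y. is_cycle E ends c1 \<and> is_cycle E ends c2 \<and>
        {x, y} \<in> cycle_edges c1 \<and> {x, y} \<in> cycle_edges c2 \<longrightarrow>
        cycle_edges c1 = cycle_edges c2)"

end

theory Submission
  imports Defs
begin

text \<open>
  Put x = (1 - q) / q. Summing over the connected spanning edge sets S gives
  R_G(q) = q^|E| Z_G(x), where Z_G(x) is the sum over S of the products of the x_e, e in S, taken
  with an independent weight x_e on every edge. For |q| > 1 all weights lie in the disc
  |1 + z| < 1, i.e. in {z. z \<noteq> 0 \<and> Re (1 / z) < -1/2}. The sum factors under three reductions:
  two parallel edges of weights x, y merge into one edge of weight (1 + x) (1 + y) - 1; a pendant
  vertex is deleted at the cost of the factor x_a of its edge; a vertex of degree two is smoothed,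
  its edges of weights x, y becoming one edge of weight x y / (x + y), at the cost of the factor
  x + y. The disc is closed under both compositions and all factors are nonzero on it.
  A cactus without parallel edges and with two or more vertices has a vertex of degree at most
  two, namely the first vertex of a longest path: two chords from it to the path would give two
  cycles through the first path edge. Smoothing keeps the graph a cactus, so induction on
  |V| + |E| reduces G to a single vertex, where the sum is 1. Hence Z_G(x) \<noteq> 0.
\<close>

section \<open>Connectivity of a relation on a vertex set\<close>

definition rel_connected_on :: "'a set \<Rightarrow> ('a \<times> 'a) set \<Rightarrow> bool" where
  "rel_connected_on W R \<longleftrightarrow> (\<forall>x\<in>W. \<forall>y\<in>W. (x, y) \<in> R\<^sup>*)"

lemma spanning_connected_iff_rel_connected_on:
  "spanning_connected V S ends \<longleftrightarrow> rel_connected_on V (edge_rel S ends)"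
  unfolding spanning_connected_def rel_connected_on_def by simp

lemma rtrancl_bypass:
  assumes "(x, y) \<in> R\<^sup>*" "x \<noteq> c" "y \<noteq> c"
    and direct: "\<And>p q. (p, q) \<in> R \<Longrightarrow> p \<noteq> c \<Longrightarrow> q \<noteq> c \<Longrightarrow> (p, q) \<in> R'\<^sup>*"
    and detour: "\<And>p q. (p, c) \<in> R \<Longrightarrow> (c, q) \<in> R \<Longrightarrow> (p, q) \<in> R'\<^sup>*"
  shows "(x, y) \<in> R'\<^sup>*"
proof -
  from assms(1) have "(y \<noteq> c \<longrightarrow> (x, y) \<in> R'\<^sup>*) \<and> (y = c \<longrightarrow> (\<exists>p. (p, c) \<in> R \<and> (x, p) \<in> R'\<^sup>*))"
  proof (induction rule: rtrancl_induct)
    case base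
    then show ?case using \<open>x \<noteq> c\<close> by auto
  next
    case (step y z)
    show ?case
    proof (cases "y = c")
      case True
      then obtain p where "(p, c) \<in> R" "(x, p) \<in> R'\<^sup>*" using step.IH by auto
      with detour[of p z] step.hyps(2) True show ?thesis by (auto intro: rtrancl_trans)
    next
      case False
      then have "(x, y) \<in> R'\<^sup>*" using step.IH by auto
      with direct[of y z] step.hyps(2) False show ?thesis by (auto intro: rtrancl_trans)
    qed
  qed
  then show ?thesis using \<open>y \<noteq> c\<close> by auto
qed

lemma rel_connected_on_insertI:
  assumes "rel_connected_on W R" "R \<subseteq> R'\<^sup>*" "u \<in> W" "(v, u) \<in> R'\<^sup>*" "(u, v) \<in> R'\<^sup>*"
  shows "rel_connected_on (insert v W) R'"
proof -
  have W: "(x, y) \<in> R'\<^sup>*" if "x \<in> W" "y \<in> W" for x y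
    using assms(1,2) that rtrancl_subset_rtrancl unfolding rel_connected_on_def by blast
  show ?thesis
    unfolding rel_connected_on_def
    using W[OF _ \<open>u \<in> W\<close>] W[OF \<open>u \<in> W\<close>] assms(4,5) by (blast intro: rtrancl_trans)
qed

lemma not_rel_connected_on_insert_isolated:
  assumes "R \<subseteq> W \<times> W" "v \<notin> W" "W \<noteq> {}"
  shows "\<not> rel_connected_on (insert v W) R"
proof
  assume "rel_connected_on (insert v W) R"
  moreover obtain y where "y \<in> W" using assms(3) by auto
  ultimately have "(v, y) \<in> R\<^sup>*" unfolding rel_connected_on_def by auto
  then show False
    using \<open>y \<in> W\<close> assms(1,2) by (cases rule: converse_rtranclE) auto
qed

lemma rel_connected_on_insert_pendant_iff:
  assumes "R \<subseteq> W \<times> W" "v \<notin> W" "u \<in> W"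
  shows "rel_connected_on (insert v W) ({(v, u), (u, v)} \<union> R) \<longleftrightarrow> rel_connected_on W R"
proof
  assume conn: "rel_connected_on (insert v W) ({(v, u), (u, v)} \<union> R)"
  show "rel_connected_on W R"
    unfolding rel_connected_on_def
  proof (intro ballI)
    fix x y assume "x \<in> W" "y \<in> W"
    with conn have "(x, y) \<in> ({(v, u), (u, v)} \<union> R)\<^sup>*" unfolding rel_connected_on_def by blast
    then show "(x, y) \<in> R\<^sup>*"
      by (rule rtrancl_bypass[where c = v]) (use \<open>x \<in> W\<close> \<open>y \<in> W\<close> assms in auto)
  qed
next
  assume "rel_connected_on W R"
  then show "rel_connected_on (insert v W) ({(v, u), (u, v)} \<union> R)"
    by (rule rel_connected_on_insertI[OF _ _ \<open>u \<in> W\<close>]) auto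
qed

lemma rel_connected_on_insert_series_iff:
  assumes "R \<subseteq> W \<times> W" "v \<notin> W" "u \<in> W" "w \<in> W"
  shows "rel_connected_on (insert v W) ({(v, u), (u, v)} \<union> ({(v, w), (w, v)} \<union> R))
     \<longleftrightarrow> rel_connected_on W ({(u, w), (w, u)} \<union> R)"
proof
  assume conn: "rel_connected_on (insert v W) ({(v, u), (u, v)} \<union> ({(v, w), (w, v)} \<union> R))"
  show "rel_connected_on W ({(u, w), (w, u)} \<union> R)"
    unfolding rel_connected_on_def
  proof (intro ballI)
    fix x y assume "x \<in> W" "y \<in> W"
    with conn have "(x, y) \<in> ({(v, u), (u, v)} \<union> ({(v, w), (w, v)} \<union> R))\<^sup>*"
      unfolding rel_connected_on_def by blast
    then show "(x, y) \<in> ({(u, w), (w, u)} \<union> R)\<^sup>*"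
      by (rule rtrancl_bypass[where c = v]) (use \<open>x \<in> W\<close> \<open>y \<in> W\<close> assms in auto)
  qed
next
  let ?R' = "{(v, u), (u, v)} \<union> ({(v, w), (w, v)} \<union> R)"
  have "(u, w) \<in> ?R'\<^sup>*" "(w, u) \<in> ?R'\<^sup>*"
    by (meson UnCI insertCI converse_rtrancl_into_rtrancl r_into_rtrancl)+
  then have "{(u, w), (w, u)} \<union> R \<subseteq> ?R'\<^sup>*" by auto
  moreover assume "rel_connected_on W ({(u, w), (w, u)} \<union> R)"
  ultimately show "rel_connected_on (insert v W) ?R'"
    by (intro rel_connected_on_insertI[OF _ _ \<open>u \<in> W\<close>]) auto
qed

lemma edge_rel_insert:
  assumes "ends e = {p, q}"
  shows "edge_rel (insert e S) ends = {(p, q), (q, p)} \<union> edge_rel S ends"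
  using assms unfolding edge_rel_def by (auto simp: doubleton_eq_iff)

lemma edge_rel_cong:
  assumes "\<And>e. e \<in> S \<Longrightarrow> ends e = ends' e"
  shows "edge_rel S ends = edge_rel S ends'"
  using assms unfolding edge_rel_def by auto

lemma edge_rel_subset:
  assumes "\<And>e. e \<in> S \<Longrightarrow> ends e \<subseteq> W"
  shows "edge_rel S ends \<subseteq> W \<times> W"
  using assms unfolding edge_rel_def by auto

lemma not_spanning_connected_isolated:
  assumes "\<And>e. e \<in> S \<Longrightarrow> ends e \<subseteq> V - {v}" "v \<in> V" "V - {v} \<noteq> {}"
  shows "\<not> spanning_connected V S ends"
proof -
  have R: "edge_rel S ends \<subseteq> (V - {v}) \<times> (V - {v})" using assms(1) by (rule edge_rel_subset)
  have V: "insert v (V - {v}) = V" using assms(2) by auto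
  show ?thesis
    using not_rel_connected_on_insert_isolated[OF R, of v] assms(3)
    unfolding spanning_connected_iff_rel_connected_on V by simp
qed

lemma spanning_connected_insert_pendant_iff:
  assumes "\<And>e. e \<in> S \<Longrightarrow> ends e \<subseteq> V - {v}" "ends a = {v, u}" "v \<in> V" "u \<in> V - {v}"
  shows "spanning_connected V (insert a S) ends \<longleftrightarrow> spanning_connected (V - {v}) S ends"
proof -
  have R: "edge_rel S ends \<subseteq> (V - {v}) \<times> (V - {v})" using assms(1) by (rule edge_rel_subset)
  have V: "insert v (V - {v}) = V" using assms(3) by auto
  show ?thesis
    using rel_connected_on_insert_pendant_iff[OF R, of v u] assms(4)
    unfolding spanning_connected_iff_rel_connected_on edge_rel_insert[of ends a v u, OF assms(2)] V
    by simp
qed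

lemma spanning_connected_insert_series_iff:
  assumes "\<And>e. e \<in> S \<Longrightarrow> ends e \<subseteq> V - {v}" "ends a = {v, u}" "ends b = {v, w}"
    "v \<in> V" "u \<in> V - {v}" "w \<in> V - {v}"
    and "ends' c = {u, w}" "\<And>e. e \<in> S \<Longrightarrow> ends' e = ends e"
  shows "spanning_connected V (insert a (insert b S)) ends
     \<longleftrightarrow> spanning_connected (V - {v}) (insert c S) ends'"
proof -
  have R: "edge_rel S ends \<subseteq> (V - {v}) \<times> (V - {v})" using assms(1) by (rule edge_rel_subset)
  have V: "insert v (V - {v}) = V" using assms(4) by auto
  have "edge_rel S ends' = edge_rel S ends" using assms(8) by (rule edge_rel_cong)
  then show ?thesis
    using rel_connected_on_insert_series_iff[OF R, of v u w] assms(5,6)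
    unfolding spanning_connected_iff_rel_connected_on V edge_rel_insert[of ends a v u, OF assms(2)]
      edge_rel_insert[of ends b v w, OF assms(3)] edge_rel_insert[of ends' c u w, OF assms(7)]
    by simp
qed

section \<open>The sum over connected spanning edge sets\<close>

definition spanning_conn_sum ::
    "'v set \<Rightarrow> 'e set \<Rightarrow> ('e \<Rightarrow> 'v set) \<Rightarrow> ('e \<Rightarrow> complex) \<Rightarrow> complex" where
  "spanning_conn_sum V E ends x =
     (\<Sum>S\<in>Pow E. if spanning_connected V S ends then \<Prod>e\<in>S. x e else 0)"

lemma poly_reliability_poly_eq_spanning_conn_sum:
  assumes "finite E" "q \<noteq> 0"
  shows "poly (reliability_poly V E ends) q
    = q ^ card E * spanning_conn_sum V E ends (\<lambda>_. (1 - q) / q)"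
proof -
  have summand: "(1 - q) ^ card S * q ^ card (E - S) = q ^ card E * (\<Prod>e\<in>S. (1 - q) / q)"
    if "S \<subseteq> E" for S
  proof -
    have "card E = card (E - S) + card S"
      using that assms(1) by (metis card_Diff_subset card_mono finite_subset le_add_diff_inverse2)
    then show ?thesis using assms(2) by (simp add: power_add power_divide)
  qed
  have "poly (reliability_poly V E ends) q
      = (\<Sum>S\<in>{S \<in> Pow E. spanning_connected V S ends}. (1 - q) ^ card S * q ^ card (E - S))"
    unfolding reliability_poly_def by (simp add: poly_sum Pow_def)
  also have "\<dots> = (\<Sum>S\<in>Pow E.
      if spanning_connected V S ends then (1 - q) ^ card S * q ^ card (E - S) else 0)"
    by (rule sum.inter_filter) (simp add: assms(1))
  also have "\<dots> = q ^ card E * spanning_conn_sum V E ends (\<lambda>_. (1 - q) / q)"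
    unfolding spanning_conn_sum_def sum_distrib_left by (intro sum.cong) (auto simp: summand)
  finally show ?thesis .
qed

lemma spanning_conn_sum_singleton: "spanning_conn_sum {v} {} ends x = 1"
  unfolding spanning_conn_sum_def spanning_connected_def by simp

lemma sum_Pow_remove:
  assumes "finite E" "e \<in> E"
  shows "(\<Sum>S\<in>Pow E. g S) = (\<Sum>S\<in>Pow (E - {e}). g S + g (insert e S))"
proof -
  have "Pow E = Pow (E - {e}) \<union> insert e ` Pow (E - {e})"
    using Pow_insert[of e "E - {e}"] assms(2) by (simp add: insert_absorb)
  moreover have "Pow (E - {e}) \<inter> insert e ` Pow (E - {e}) = {}" by auto
  moreover have "inj_on (insert e) (Pow (E - {e}))" unfolding inj_on_def by blast
  ultimately show ?thesis using assms(1)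
    by (simp add: sum.union_disjoint sum.reindex sum.distrib)
qed

lemma spanning_conn_sum_parallel:
  assumes "finite E" "e \<in> E" "f \<in> E" "e \<noteq> f" "ends e = ends f"
  shows "spanning_conn_sum V E ends x
       = spanning_conn_sum V (E - {f}) ends (x(e := (1 + x e) * (1 + x f) - 1))"
proof -
  let ?x' = "x(e := (1 + x e) * (1 + x f) - 1)"
  let ?t = "\<lambda>S. if spanning_connected V S ends then \<Prod>e\<in>S. x e else 0"
  let ?t' = "\<lambda>S. if spanning_connected V S ends then \<Prod>e\<in>S. ?x' e else 0"
  have "spanning_conn_sum V E ends x = (\<Sum>S\<in>Pow (E - {f}). ?t S + ?t (insert f S))"
    unfolding spanning_conn_sum_def using assms(1,3) by (rule sum_Pow_remove)
  also have "\<dots> = (\<Sum>S\<in>Pow (E - {f} - {e}).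
      (?t S + ?t (insert f S)) + (?t (insert e S) + ?t (insert f (insert e S))))"
    by (rule sum_Pow_remove) (use assms in auto)
  also have "\<dots> = (\<Sum>S\<in>Pow (E - {f} - {e}). ?t' S + ?t' (insert e S))"
  proof (rule sum.cong[OF refl])
    fix S assume S: "S \<in> Pow (E - {f} - {e})"
    then have "finite S" "e \<notin> S" "f \<notin> S" using assms(1) by (auto intro: finite_subset)
    moreover have "edge_rel (insert f S) ends = edge_rel (insert e S) ends"
      "edge_rel (insert f (insert e S)) ends = edge_rel (insert e S) ends"
      using assms(5) unfolding edge_rel_def by auto
    moreover have "(\<Prod>e\<in>S. ?x' e) = (\<Prod>e\<in>S. x e)"
      using \<open>e \<notin> S\<close> by (intro prod.cong) auto
    ultimately show "(?t S + ?t (insert f S)) + (?t (insert e S) + ?t (insert f (insert e S)))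
        = ?t' S + ?t' (insert e S)"
      using assms(4) unfolding spanning_connected_def by (simp add: algebra_simps)
  qed
  also have "\<dots> = spanning_conn_sum V (E - {f}) ends ?x'"
    unfolding spanning_conn_sum_def using assms by (intro sum_Pow_remove[symmetric]) auto
  finally show ?thesis .
qed

lemma spanning_conn_sum_pendant:
  assumes mg: "multigraph V E ends" and a: "a \<in> E" "ends a = {v, u}"
    and others: "\<And>e. e \<in> E - {a} \<Longrightarrow> ends e \<subseteq> V - {v}"
  shows "spanning_conn_sum V E ends x = x a * spanning_conn_sum (V - {v}) (E - {a}) ends x"
proof -
  have "finite E" "v \<in> V" "u \<in> V - {v}"
    using mg a unfolding multigraph_def by (auto simp: card_2_iff doubleton_eq_iff)
  let ?t = "\<lambda>S. if spanning_connected V S ends then \<Prod>e\<in>S. x e else 0"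
  have "spanning_conn_sum V E ends x = (\<Sum>S\<in>Pow (E - {a}). ?t S + ?t (insert a S))"
    unfolding spanning_conn_sum_def using \<open>finite E\<close> a(1) by (rule sum_Pow_remove)
  also have "\<dots> = (\<Sum>S\<in>Pow (E - {a}).
      x a * (if spanning_connected (V - {v}) S ends then \<Prod>e\<in>S. x e else 0))"
  proof (rule sum.cong[OF refl])
    fix S assume S: "S \<in> Pow (E - {a})"
    then have "finite S" "a \<notin> S" using \<open>finite E\<close> by (auto intro: finite_subset)
    have S_others: "\<And>e. e \<in> S \<Longrightarrow> ends e \<subseteq> V - {v}" using S others by auto
    show "?t S + ?t (insert a S)
        = x a * (if spanning_connected (V - {v}) S ends then \<Prod>e\<in>S. x e else 0)"
      using not_spanning_connected_isolated[of S ends V v, OF S_others \<open>v \<in> V\<close>]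
        spanning_connected_insert_pendant_iff[of S ends V v a u, OF S_others a(2) \<open>v \<in> V\<close>]
        \<open>finite S\<close> \<open>a \<notin> S\<close> \<open>u \<in> V - {v}\<close> by auto
  qed
  also have "\<dots> = x a * spanning_conn_sum (V - {v}) (E - {a}) ends x"
    unfolding spanning_conn_sum_def by (simp add: sum_distrib_left)
  finally show ?thesis .
qed

lemma spanning_connected_series_cases:
  assumes S: "S \<subseteq> E - {a, b}" and others: "\<And>e. e \<in> E - {a, b} \<Longrightarrow> ends e \<subseteq> V - {v}"
    and ends_ab: "ends a = {v, u}" "ends b = {v, w}"
    and "v \<in> V" "u \<in> V - {v}" "w \<in> V - {v}"
  shows "\<not> spanning_connected V S ends"
    and "spanning_connected V (insert a S) ends
      \<longleftrightarrow> spanning_connected (V - {v}) S (ends(b := {u, w}))"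
    and "spanning_connected V (insert b S) ends
      \<longleftrightarrow> spanning_connected (V - {v}) S (ends(b := {u, w}))"
    and "spanning_connected V (insert a (insert b S)) ends
      \<longleftrightarrow> spanning_connected (V - {v}) (insert b S) (ends(b := {u, w}))"
proof -
  let ?ends' = "ends(b := {u, w})"
  have S_others: "\<And>e. e \<in> S \<Longrightarrow> ends e \<subseteq> V - {v}" using S others by auto
  have S_ends': "\<And>e. e \<in> S \<Longrightarrow> ?ends' e = ends e" using S by auto
  have "edge_rel S ?ends' = edge_rel S ends" using S_ends' by (rule edge_rel_cong)
  then have S_conn: "spanning_connected (V - {v}) S ?ends' \<longleftrightarrow> spanning_connected (V - {v}) S ends"
    unfolding spanning_connected_iff_rel_connected_on by simp
  show "\<not> spanning_connected V S ends"
    using not_spanning_connected_isolated[of S ends V v, OF S_others \<open>v \<in> V\<close>] \<open>u \<in> V - {v}\<close>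
    by auto
  show "spanning_connected V (insert a S) ends \<longleftrightarrow> spanning_connected (V - {v}) S ?ends'"
    using spanning_connected_insert_pendant_iff[of S ends V v a u, OF S_others ends_ab(1) \<open>v \<in> V\<close>]
      \<open>u \<in> V - {v}\<close> S_conn by simp
  show "spanning_connected V (insert b S) ends \<longleftrightarrow> spanning_connected (V - {v}) S ?ends'"
    using spanning_connected_insert_pendant_iff[of S ends V v b w, OF S_others ends_ab(2) \<open>v \<in> V\<close>]
      \<open>w \<in> V - {v}\<close> S_conn by simp
  show "spanning_connected V (insert a (insert b S)) ends
      \<longleftrightarrow> spanning_connected (V - {v}) (insert b S) ?ends'"
    using spanning_connected_insert_series_iff[of S ends V v a u b w ?ends' b,
        OF S_others ends_ab \<open>v \<in> V\<close> \<open>u \<in> V - {v}\<close> \<open>w \<in> V - {v}\<close> _ S_ends']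
    by simp
qed

lemma spanning_conn_sum_series:
  assumes mg: "multigraph V E ends" and ab: "a \<in> E" "b \<in> E" "a \<noteq> b"
    and ends_ab: "ends a = {v, u}" "ends b = {v, w}"
    and others: "\<And>e. e \<in> E - {a, b} \<Longrightarrow> ends e \<subseteq> V - {v}"
    and nonzero: "x a + x b \<noteq> 0"
  shows "spanning_conn_sum V E ends x = (x a + x b) *
    spanning_conn_sum (V - {v}) (E - {a}) (ends(b := {u, w})) (x(b := x a * x b / (x a + x b)))"
proof -
  let ?ends' = "ends(b := {u, w})"
  \<comment> \<open>kept opaque: the proof only needs \<open>(x a + x b) * y = x a * x b\<close>\<close>
  define y where "y = x a * x b / (x a + x b)"
  let ?x' = "x(b := y)"
  let ?t = "\<lambda>S. if spanning_connected V S ends then \<Prod>e\<in>S. x e else 0"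
  let ?t' = "\<lambda>S. if spanning_connected (V - {v}) S ?ends' then \<Prod>e\<in>S. ?x' e else 0"
  have "finite E" "v \<in> V" "u \<in> V - {v}" "w \<in> V - {v}"
    using mg ab ends_ab unfolding multigraph_def by (auto simp: card_2_iff doubleton_eq_iff)
  have y: "(x a + x b) * y = x a * x b" unfolding y_def using nonzero by simp
  have "spanning_conn_sum V E ends x = (\<Sum>S\<in>Pow (E - {a}). ?t S + ?t (insert a S))"
    unfolding spanning_conn_sum_def using \<open>finite E\<close> ab(1) by (rule sum_Pow_remove)
  also have "\<dots> = (\<Sum>S\<in>Pow (E - {a} - {b}).
      (?t S + ?t (insert a S)) + (?t (insert b S) + ?t (insert a (insert b S))))"
    by (rule sum_Pow_remove) (use \<open>finite E\<close> ab in auto)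
  also have "\<dots> = (\<Sum>S\<in>Pow (E - {a} - {b}). (x a + x b) * (?t' S + ?t' (insert b S)))"
  proof (rule sum.cong[OF refl])
    fix S assume "S \<in> Pow (E - {a} - {b})"
    then have S: "S \<subseteq> E - {a, b}" "finite S" "a \<notin> S" "b \<notin> S"
      using \<open>finite E\<close> by (auto intro: finite_subset)
    note connected = spanning_connected_series_cases[OF S(1) others ends_ab
        \<open>v \<in> V\<close> \<open>u \<in> V - {v}\<close> \<open>w \<in> V - {v}\<close>]
    have "(\<Prod>e\<in>S. ?x' e) = (\<Prod>e\<in>S. x e)"
      using S(4) by (intro prod.cong) auto
    then have products:
      "(\<Prod>e\<in>insert a S. x e) = x a * (\<Prod>e\<in>S. x e)"
      "(\<Prod>e\<in>insert b S. x e) = x b * (\<Prod>e\<in>S. x e)"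
      "(\<Prod>e\<in>insert a (insert b S). x e) = x a * x b * (\<Prod>e\<in>S. x e)"
      "(\<Prod>e\<in>insert b S. ?x' e) = y * (\<Prod>e\<in>S. x e)"
      "(\<Prod>e\<in>S. ?x' e) = (\<Prod>e\<in>S. x e)"
      using S(2-4) ab(3) by auto
    let ?A = "spanning_connected (V - {v}) S ?ends'"
    let ?B = "spanning_connected (V - {v}) (insert b S) ?ends'"
    show "(?t S + ?t (insert a S)) + (?t (insert b S) + ?t (insert a (insert b S)))
        = (x a + x b) * (?t' S + ?t' (insert b S))"
      using connected products y
      by (cases ?A; cases ?B) (simp_all add: ring_distribs flip: mult.assoc)
  qed
  also have "\<dots> = (x a + x b) * spanning_conn_sum (V - {v}) (E - {a}) ?ends' ?x'"
    unfolding spanning_conn_sum_def sum_distrib_left[symmetric]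
    by (subst sum_Pow_remove[of _ b]) (use \<open>finite E\<close> ab in auto)
  finally show ?thesis unfolding y_def .
qed

section \<open>The disc of radius 1 around -1\<close>

lemma norm_one_plus_less_one_iff: "cmod (1 + z) < 1 \<longleftrightarrow> z \<noteq> 0 \<and> Re (inverse z) < -1/2"
proof (cases "z = 0")
  case False
  then have pos: "0 < (Re z)\<^sup>2 + (Im z)\<^sup>2"
    by (simp add: sum_power2_gt_zero_iff complex_eq_iff)
  have "cmod (1 + z) < 1 \<longleftrightarrow> (1 + Re z)\<^sup>2 + (Im z)\<^sup>2 < 1"
    by (simp add: cmod_def)
  also have "\<dots> \<longleftrightarrow> 2 * Re z + ((Re z)\<^sup>2 + (Im z)\<^sup>2) < 0"
    by (simp add: power2_eq_square algebra_simps)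
  also have "\<dots> \<longleftrightarrow> Re z / ((Re z)\<^sup>2 + (Im z)\<^sup>2) < -1/2"
    using pos by (auto simp: divide_less_eq field_simps)
  also have "Re z / ((Re z)\<^sup>2 + (Im z)\<^sup>2) = Re (inverse z)"
    by (simp add: power2_eq_square)
  finally show ?thesis using False by simp
qed simp

lemma series_weight_in_disc:
  assumes "cmod (1 + x) < 1" "cmod (1 + y) < 1"
  shows "x + y \<noteq> 0" "cmod (1 + x * y / (x + y)) < 1"
proof -
  have x: "x \<noteq> 0" "Re (inverse x) < -1/2" and y: "y \<noteq> 0" "Re (inverse y) < -1/2"
    using assms norm_one_plus_less_one_iff by auto
  define s where "s = inverse x + inverse y"
  have "Re s < -1" unfolding s_def using x y by simp
  then have "s \<noteq> 0" by auto
  have sum: "x + y = x * y * s" unfolding s_def using x y by (simp add: field_simps)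
  then show "x + y \<noteq> 0" using x y \<open>s \<noteq> 0\<close> by simp
  have "x * y / (x + y) = inverse s" unfolding sum using x y \<open>s \<noteq> 0\<close> by (simp add: field_simps)
  then show "cmod (1 + x * y / (x + y)) < 1"
    unfolding norm_one_plus_less_one_iff using \<open>Re s < -1\<close> \<open>s \<noteq> 0\<close> by simp
qed

lemma parallel_weight_in_disc:
  assumes "cmod (1 + x) < 1" "cmod (1 + y) < 1"
  shows "cmod (1 + ((1 + x) * (1 + y) - 1)) < 1"
proof -
  have "cmod (1 + ((1 + x) * (1 + y) - 1)) = cmod (1 + x) * cmod (1 + y)"
    by (simp add: norm_mult)
  also have "\<dots> \<le> cmod (1 + x)" using assms(2) by (intro mult_left_le) auto
  also have "\<dots> < 1" by (rule assms(1))
  finally show ?thesis .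
qed

section \<open>Cycles\<close>

definition cycles_edge_disjoint :: "'e set \<Rightarrow> ('e \<Rightarrow> 'v set) \<Rightarrow> bool" where
  "cycles_edge_disjoint E ends \<longleftrightarrow> (\<forall>c1 c2 x y. is_cycle E ends c1 \<and> is_cycle E ends c2 \<and>
     {x, y} \<in> cycle_edges c1 \<and> {x, y} \<in> cycle_edges c2 \<longrightarrow> cycle_edges c1 = cycle_edges c2)"

lemma adj_commute: "adj E ends p q \<longleftrightarrow> adj E ends q p"
  unfolding adj_def by (auto simp: insert_commute)

lemma adj_in_vertices:
  assumes "multigraph V E ends" "adj E ends p q" shows "p \<in> V" "q \<in> V"
  using assms unfolding multigraph_def adj_def by auto

lemma adj_irrefl: "adj E ends p q \<Longrightarrow> p \<noteq> q"
  unfolding adj_def by auto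

lemma cycles_edge_disjointD:
  assumes "cycles_edge_disjoint E ends" "is_cycle E ends c1" "is_cycle E ends c2"
    "{x, y} \<in> cycle_edges c1" "{x, y} \<in> cycle_edges c2"
  shows "cycle_edges c1 = cycle_edges c2"
  using assms unfolding cycles_edge_disjoint_def by blast

lemma is_cycle_iff_cycle_edges_adj:
  "is_cycle E ends vs \<longleftrightarrow>
     3 \<le> length vs \<and> distinct vs \<and> (\<forall>p q. {p, q} \<in> cycle_edges vs \<longrightarrow> adj E ends p q)"
proof -
  have "(\<forall>i<length vs. adj E ends (vs ! i) (vs ! ((i + 1) mod length vs))) \<longleftrightarrow>
        (\<forall>p q. {p, q} \<in> cycle_edges vs \<longrightarrow> adj E ends p q)"
    unfolding cycle_edges_def by (auto simp: doubleton_eq_iff) (metis adj_commute)+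
  then show ?thesis unfolding is_cycle_def by blast
qed

lemma cycle_edges_nth: "i < length vs \<Longrightarrow> {vs ! i, vs ! ((i + 1) mod length vs)} \<in> cycle_edges vs"
  unfolding cycle_edges_def by blast

lemma cycle_edges_subset_set: "X \<in> cycle_edges vs \<Longrightarrow> X \<subseteq> set vs"
  unfolding cycle_edges_def by (auto intro!: nth_mem mod_less_divisor)

lemma cycle_edges_rotate_subset: "cycle_edges (rotate m vs) \<subseteq> cycle_edges vs"
proof
  fix X assume "X \<in> cycle_edges (rotate m vs)"
  then obtain k where k: "k < length vs"
    and X: "X = {rotate m vs ! k, rotate m vs ! ((k + 1) mod length vs)}"
    unfolding cycle_edges_def by auto
  then have "0 < length vs" by linarith
  let ?i = "(m + k) mod length vs"
  have "rotate m vs ! ((k + 1) mod length vs) = vs ! ((m + (k + 1) mod length vs) mod length vs)"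
    using \<open>0 < length vs\<close> by (simp add: nth_rotate)
  also have "(m + (k + 1) mod length vs) mod length vs = (?i + 1) mod length vs"
    by (simp add: mod_simps add.assoc)
  finally have "X = {vs ! ?i, vs ! ((?i + 1) mod length vs)}"
    using X k by (simp add: nth_rotate)
  then show "X \<in> cycle_edges vs"
    using cycle_edges_nth[of ?i vs] \<open>0 < length vs\<close> by simp
qed

lemma cycle_edges_rotate: "cycle_edges (rotate m vs) = cycle_edges vs"
proof
  have "rotate ((length vs - 1) * m) (rotate m vs) = vs"
  proof (cases "vs = []")
    case False
    then have "(length vs - 1) * m + m = length vs * m" by (cases "length vs") auto
    then show ?thesis by (simp add: rotate_rotate rotate_conv_mod[of "length vs * m"])
  qed simp
  then show "cycle_edges vs \<subseteq> cycle_edges (rotate m vs)"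
    by (metis cycle_edges_rotate_subset)
qed (rule cycle_edges_rotate_subset)

lemma cycle_edges_rotate_to_closing:
  assumes "{u, w} \<in> cycle_edges vs"
  obtains m where "{last (rotate m vs), hd (rotate m vs)} = {u, w}"
proof -
  obtain i where i: "i < length vs" "{u, w} = {vs ! i, vs ! ((i + 1) mod length vs)}"
    using assms unfolding cycle_edges_def by auto
  let ?d = "rotate (Suc i) vs"
  have "vs \<noteq> []" using i by auto
  then have "last ?d = vs ! ((Suc i + (length vs - 1)) mod length vs)"
    "hd ?d = vs ! (Suc i mod length vs)"
    by (simp_all add: last_conv_nth hd_conv_nth nth_rotate del: rotate_Suc)
  moreover have "Suc i + (length vs - 1) = i + length vs" using i by simp
  ultimately show ?thesis using i that[of "Suc i"] by simp
qed

definition path_edges :: "'v list \<Rightarrow> 'v set set" where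
  "path_edges vs = {{vs ! i, vs ! Suc i} | i. Suc i < length vs}"

lemma Collect_less_eq_insert_pred:
  assumes "0 < n" shows "{i. i < n} = insert (n - 1) {i. Suc i < n}"
  using assms by auto

lemma cycle_edges_eq_insert_path_edges:
  assumes "vs \<noteq> []"
  shows "cycle_edges vs = insert {last vs, hd vs} (path_edges vs)"
proof -
  let ?n = "length vs"
  have "cycle_edges vs = (\<lambda>i. {vs ! i, vs ! ((i + 1) mod ?n)}) ` insert (?n - 1) {i. Suc i < ?n}"
    unfolding cycle_edges_def image_Collect[symmetric] using assms
    by (simp add: Collect_less_eq_insert_pred)
  also have "\<dots> = insert {last vs, hd vs} ((\<lambda>i. {vs ! i, vs ! Suc i}) ` {i. Suc i < ?n})"
    using assms by (simp add: last_conv_nth hd_conv_nth)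
  also have "(\<lambda>i. {vs ! i, vs ! Suc i}) ` {i. Suc i < ?n} = path_edges vs"
    unfolding path_edges_def image_Collect ..
  finally show ?thesis .
qed

lemma path_edges_snoc:
  assumes "vs \<noteq> []"
  shows "path_edges (vs @ [v]) = insert {last vs, v} (path_edges vs)"
proof -
  let ?n = "length vs"
  have "path_edges (vs @ [v])
      = (\<lambda>i. {(vs @ [v]) ! i, (vs @ [v]) ! Suc i}) ` insert (?n - 1) {i. Suc i < ?n}"
    unfolding path_edges_def image_Collect[symmetric] using assms
    by (simp add: Collect_less_eq_insert_pred)
  also have "\<dots> = insert {last vs, v} ((\<lambda>i. {vs ! i, vs ! Suc i}) ` {i. Suc i < ?n})"
    using assms by (auto simp: last_conv_nth nth_append)
  also have "(\<lambda>i. {vs ! i, vs ! Suc i}) ` {i. Suc i < ?n} = path_edges vs"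
    unfolding path_edges_def image_Collect ..
  finally show ?thesis .
qed

lemma closing_edge_notin_path_edges:
  assumes "distinct vs" "3 \<le> length vs"
  shows "{last vs, hd vs} \<notin> path_edges vs"
proof
  let ?n = "length vs"
  assume "{last vs, hd vs} \<in> path_edges vs"
  then obtain i where i: "Suc i < ?n" "{last vs, hd vs} = {vs ! i, vs ! Suc i}"
    unfolding path_edges_def by auto
  have "vs \<noteq> []" "0 < ?n" using assms(2) by auto
  with i(2) have "{vs ! (?n - 1), vs ! 0} = {vs ! i, vs ! Suc i}"
    by (simp add: last_conv_nth hd_conv_nth)
  then consider "vs ! 0 = vs ! Suc i" | "vs ! (?n - 1) = vs ! Suc i" "vs ! 0 = vs ! i"
    by (auto simp: doubleton_eq_iff)
  moreover have inj: "j = k" if "vs ! j = vs ! k" "j < ?n" "k < ?n" for j k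
    using that assms(1) nth_eq_iff_index_eq by blast
  ultimately show False
  proof cases
    case 1
    with inj[of 0 "Suc i"] i(1) \<open>0 < ?n\<close> show False by simp
  next
    case 2
    with inj[of "?n - 1" "Suc i"] inj[of 0 i] i(1) \<open>0 < ?n\<close> assms(2) show False by simp
  qed
qed

lemma cycle_edges_snoc:
  assumes "distinct vs" "3 \<le> length vs"
  shows "cycle_edges (vs @ [v])
    = (cycle_edges vs - {{last vs, hd vs}}) \<union> {{last vs, v}, {v, hd vs}}"
proof -
  have "vs \<noteq> []" using assms(2) by auto
  then show ?thesis
    using closing_edge_notin_path_edges[OF assms]
    by (auto simp: cycle_edges_eq_insert_path_edges path_edges_snoc)
qed

lemma is_cycle_subdivide:
  assumes cycle: "is_cycle E' ends' c" and uw: "{u, w} \<in> cycle_edges c" and "v \<notin> set c"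
    and "adj E ends v u" "adj E ends v w"
    and transfer: "\<And>p q. adj E' ends' p q \<Longrightarrow> {p, q} \<noteq> {u, w} \<Longrightarrow> adj E ends p q"
  shows "\<exists>c'. is_cycle E ends c' \<and> cycle_edges c' = (cycle_edges c - {{u, w}}) \<union> {{u, v}, {v, w}}"
proof -
  \<comment> \<open>rotate \<open>c\<close> until \<open>{u, w}\<close> is its closing edge, then insert \<open>v\<close> by appending it\<close>
  obtain m where closing: "{last (rotate m c), hd (rotate m c)} = {u, w}"
    using uw by (rule cycle_edges_rotate_to_closing)
  let ?d = "rotate m c"
  have d: "distinct ?d" "3 \<le> length ?d" "v \<notin> set ?d"
    using cycle \<open>v \<notin> set c\<close> unfolding is_cycle_def by auto
  have "{{last ?d, v}, {v, hd ?d}} = {{u, v}, {v, w}}"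
    using closing by (auto simp: doubleton_eq_iff insert_commute)
  then have edges: "cycle_edges (?d @ [v]) = (cycle_edges c - {{u, w}}) \<union> {{u, v}, {v, w}}"
    using cycle_edges_snoc[OF d(1,2), of v] closing by (simp add: cycle_edges_rotate)
  have "is_cycle E ends (?d @ [v])"
    unfolding is_cycle_iff_cycle_edges_adj edges
    using d cycle transfer \<open>adj E ends v u\<close> \<open>adj E ends v w\<close>
    by (auto simp: is_cycle_iff_cycle_edges_adj doubleton_eq_iff adj_commute)
  with edges show ?thesis by blast
qed

lemma cycles_edge_disjoint_mono:
  assumes "cycles_edge_disjoint E ends" "\<And>p q. adj E' ends' p q \<Longrightarrow> adj E ends p q"
  shows "cycles_edge_disjoint E' ends'"
proof -
  have "is_cycle E ends c" if "is_cycle E' ends' c" for c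
    using that assms(2) unfolding is_cycle_def by blast
  then show ?thesis using assms(1) unfolding cycles_edge_disjoint_def by blast
qed

lemma is_cycle_transfer:
  assumes "is_cycle E' ends' c" "{u, w} \<notin> cycle_edges c"
    and "\<And>p q. adj E' ends' p q \<Longrightarrow> {p, q} \<noteq> {u, w} \<Longrightarrow> adj E ends p q"
  shows "is_cycle E ends c"
  using assms unfolding is_cycle_iff_cycle_edges_adj by metis

lemma isolated_vertex_notin_cycle:
  assumes "is_cycle E ends c" "\<And>q. \<not> adj E ends v q"
  shows "v \<notin> set c"
  using assms unfolding is_cycle_def by (metis in_set_conv_nth)

definition subdivide_edge :: "'v \<Rightarrow> 'v \<Rightarrow> 'v \<Rightarrow> 'v set set \<Rightarrow> 'v set set" where
  "subdivide_edge u w v X = (if {u, w} \<in> X then X - {{u, w}} \<union> {{u, v}, {v, w}} else X)"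

lemma subdivide_edge_inj:
  assumes "subdivide_edge u w v X = subdivide_edge u w v Y"
    and "{u, v} \<notin> X" "{v, w} \<notin> X" "{u, v} \<notin> Y" "{v, w} \<notin> Y"
  shows "X = Y"
proof -
  define unsubdivide where
    "unsubdivide Z = (if {u, v} \<in> Z then insert {u, w} (Z - {{u, v}, {v, w}}) else Z)" for Z
  have inverse: "unsubdivide (subdivide_edge u w v Z) = Z" if "{u, v} \<notin> Z" "{v, w} \<notin> Z" for Z
  proof (cases "{u, w} \<in> Z")
    case True
    then have "subdivide_edge u w v Z = Z - {{u, w}} \<union> {{u, v}, {v, w}}"
      unfolding subdivide_edge_def by simp
    then have "{u, v} \<in> subdivide_edge u w v Z"
      "subdivide_edge u w v Z - {{u, v}, {v, w}} = Z - {{u, w}}"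
      using that by blast+
    with True show ?thesis unfolding unsubdivide_def by (simp add: insert_absorb)
  next
    case False
    with that show ?thesis unfolding subdivide_edge_def unsubdivide_def by simp
  qed
  from assms show ?thesis using inverse by metis
qed

lemma is_cycle_subdivide_edge:
  assumes cycle: "is_cycle E' ends' c"
    and transfer: "\<And>p q. adj E' ends' p q \<Longrightarrow> {p, q} \<noteq> {u, w} \<Longrightarrow> adj E ends p q"
    and isolated: "\<And>q. \<not> adj E' ends' v q"
    and "adj E ends v u" "adj E ends v w"
  obtains C where "is_cycle E ends C" "cycle_edges C = subdivide_edge u w v (cycle_edges c)"
proof (cases "{u, w} \<in> cycle_edges c")
  case True
  have "v \<notin> set c" using cycle isolated by (rule isolated_vertex_notin_cycle)
  from is_cycle_subdivide[OF cycle True this \<open>adj E ends v u\<close> \<open>adj E ends v w\<close> transfer]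
  show ?thesis using that True unfolding subdivide_edge_def by auto
next
  case False
  with is_cycle_transfer[OF cycle False transfer] that show ?thesis
    unfolding subdivide_edge_def by simp
qed

lemma cycles_edge_disjoint_smooth:
  assumes disjoint: "cycles_edge_disjoint E ends"
    and transfer: "\<And>p q. adj E' ends' p q \<Longrightarrow> {p, q} \<noteq> {u, w} \<Longrightarrow> adj E ends p q"
    and isolated: "\<And>q. \<not> adj E' ends' v q"
    and "adj E ends v u" "adj E ends v w"
  shows "cycles_edge_disjoint E' ends'"
  unfolding cycles_edge_disjoint_def
proof (intro allI impI, elim conjE)
  fix c1 c2 x y
  assume c1: "is_cycle E' ends' c1" and c2: "is_cycle E' ends' c2"
    and shared: "{x, y} \<in> cycle_edges c1" "{x, y} \<in> cycle_edges c2"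
  let ?S = "subdivide_edge u w v"
  obtain C1 where C1: "is_cycle E ends C1" "cycle_edges C1 = ?S (cycle_edges c1)"
    by (rule is_cycle_subdivide_edge[OF c1 transfer isolated \<open>adj E ends v u\<close> \<open>adj E ends v w\<close>])
  obtain C2 where C2: "is_cycle E ends C2" "cycle_edges C2 = ?S (cycle_edges c2)"
    by (rule is_cycle_subdivide_edge[OF c2 transfer isolated \<open>adj E ends v u\<close> \<open>adj E ends v w\<close>])
  have "{u, v} \<in> ?S (cycle_edges c1) \<and> {u, v} \<in> ?S (cycle_edges c2) \<or>
      {x, y} \<in> ?S (cycle_edges c1) \<and> {x, y} \<in> ?S (cycle_edges c2)"
    using shared unfolding subdivide_edge_def by (cases "{x, y} = {u, w}") auto
  then have "?S (cycle_edges c1) = ?S (cycle_edges c2)"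
    using cycles_edge_disjointD[OF disjoint C1(1) C2(1)] unfolding C1(2) C2(2) by blast
  moreover have "v \<notin> set c1" "v \<notin> set c2"
    using isolated_vertex_notin_cycle[OF c1 isolated] isolated_vertex_notin_cycle[OF c2 isolated]
    by simp_all
  then have "{u, v} \<notin> cycle_edges c1" "{v, w} \<notin> cycle_edges c1"
    "{u, v} \<notin> cycle_edges c2" "{v, w} \<notin> cycle_edges c2"
    using cycle_edges_subset_set by blast+
  ultimately show "cycle_edges c1 = cycle_edges c2" by (rule subdivide_edge_inj)
qed

section \<open>A vertex of degree at most two\<close>

definition simple_path :: "'v set \<Rightarrow> 'e set \<Rightarrow> ('e \<Rightarrow> 'v set) \<Rightarrow> 'v list \<Rightarrow> bool" where
  "simple_path V E ends p \<longleftrightarrow> p \<noteq> [] \<and> distinct p \<and> set p \<subseteq> V \<and>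
     (\<forall>i. Suc i < length p \<longrightarrow> adj E ends (p ! i) (p ! Suc i))"

lemma is_cycle_take_simple_path:
  assumes path: "simple_path V E ends p" and k: "2 \<le> k" "k < length p"
    and closing: "adj E ends (p ! k) (p ! 0)"
  shows "is_cycle E ends (take (Suc k) p)"
  unfolding is_cycle_def
proof (intro conjI allI impI)
  show "3 \<le> length (take (Suc k) p)" using k by simp
  show "distinct (take (Suc k) p)" using path unfolding simple_path_def by simp
  fix i assume "i < length (take (Suc k) p)"
  then have "i \<le> k" using k by simp
  show "adj E ends (take (Suc k) p ! i) (take (Suc k) p ! ((i + 1) mod length (take (Suc k) p)))"
  proof (cases "i < k")
    case True
    then show ?thesis using path k unfolding simple_path_def by simp
  next
    case False
    then show ?thesis using \<open>i \<le> k\<close> closing k by simp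
  qed
qed

lemma cycle_edges_take_first:
  assumes "2 \<le> k" "k < length p"
  shows "{p ! 0, p ! 1} \<in> cycle_edges (take (Suc k) p)"
  using cycle_edges_nth[of 0 "take (Suc k) p"] assms by simp

lemma cycle_edges_take_last:
  assumes "2 \<le> k" "k < length p"
  shows "{p ! (k - 1), p ! k} \<in> cycle_edges (take (Suc k) p)"
  using cycle_edges_nth[of "k - 1" "take (Suc k) p"] assms by simp

lemma simple_path_start_no_two_chords:
  assumes path: "simple_path V E ends p" and disjoint: "cycles_edge_disjoint E ends"
    and ij: "2 \<le> i" "i < j" "j < length p"
    and chords: "adj E ends (p ! 0) (p ! i)" "adj E ends (p ! 0) (p ! j)"
  shows False
proof -
  have "i < length p" "2 \<le> j" using ij by linarith+
  have "is_cycle E ends (take (Suc i) p)" "is_cycle E ends (take (Suc j) p)"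
    using is_cycle_take_simple_path[OF path ij(1) \<open>i < length p\<close>]
      is_cycle_take_simple_path[OF path \<open>2 \<le> j\<close> ij(3)] chords[THEN adj_commute[THEN iffD1]]
    by auto
  moreover have "{p ! 0, p ! 1} \<in> cycle_edges (take (Suc i) p)"
    "{p ! 0, p ! 1} \<in> cycle_edges (take (Suc j) p)"
    using cycle_edges_take_first[OF ij(1) \<open>i < length p\<close>]
      cycle_edges_take_first[OF \<open>2 \<le> j\<close> ij(3)] by simp_all
  ultimately have "cycle_edges (take (Suc i) p) = cycle_edges (take (Suc j) p)"
    by (intro cycles_edge_disjointD[OF disjoint])
  then have "{p ! (j - 1), p ! j} \<in> cycle_edges (take (Suc i) p)"
    using cycle_edges_take_last[OF \<open>2 \<le> j\<close> ij(3)] by simp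
  then have "p ! j \<in> set (take (Suc i) p)" by (auto dest: cycle_edges_subset_set)
  then obtain l where l: "l < Suc i" "p ! l = p ! j"
    unfolding in_set_conv_nth by auto
  have "distinct p" using path unfolding simple_path_def by simp
  with l ij have "l = j" by (simp add: nth_eq_iff_index_eq)
  with l(1) ij(2) show False by simp
qed

lemma longest_simple_path_exists:
  assumes "finite V" "v \<in> V"
  obtains p where "simple_path V E ends p" "\<And>q. simple_path V E ends q \<Longrightarrow> length q \<le> length p"
proof -
  have "simple_path V E ends [v]" using assms(2) unfolding simple_path_def by simp
  moreover have "\<forall>q. simple_path V E ends q \<longrightarrow> length q < Suc (card V)"
  proof (intro allI impI)
    fix q assume "simple_path V E ends q"
    then have "length q = card (set q)" "set q \<subseteq> V"
      unfolding simple_path_def by (simp_all add: distinct_card)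
    then show "length q < Suc (card V)" using card_mono[OF assms(1), of "set q"] by simp
  qed
  ultimately obtain p where "simple_path V E ends p"
    "\<forall>q. simple_path V E ends q \<longrightarrow> length q \<le> length p"
    using ex_has_greatest_nat[of "simple_path V E ends" "[v]" length "Suc (card V)"] by blast
  then show ?thesis using that by blast
qed

lemma longest_simple_path_start_adj:
  assumes mg: "multigraph V E ends" and path: "simple_path V E ends p"
    and longest: "\<And>q. simple_path V E ends q \<Longrightarrow> length q \<le> length p"
    and adj: "adj E ends (p ! 0) y"
  obtains k where "0 < k" "k < length p" "y = p ! k"
proof -
  have "y \<in> set p"
  proof (rule ccontr)
    assume "y \<notin> set p"
    have "simple_path V E ends (y # p)"
      unfolding simple_path_def
    proof (intro conjI allI impI)
      show "y # p \<noteq> []" "distinct (y # p)" "set (y # p) \<subseteq> V"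
        using path \<open>y \<notin> set p\<close> adj_in_vertices[OF mg adj] unfolding simple_path_def by auto
      fix i assume "Suc i < length (y # p)"
      then show "adj E ends ((y # p) ! i) ((y # p) ! Suc i)"
        using path adj[THEN adj_commute[THEN iffD1]] unfolding simple_path_def by (cases i) auto
    qed
    from longest[OF this] show False by simp
  qed
  then obtain k where "k < length p" "y = p ! k" by (auto simp: in_set_conv_nth)
  moreover have "0 < k" using adj_irrefl[OF adj] \<open>y = p ! k\<close> by (intro gr0I) auto
  ultimately show ?thesis using that by blast
qed

lemma spanning_connected_has_neighbour:
  assumes mg: "multigraph V E ends" and conn: "spanning_connected V E ends"
    and "2 \<le> card V" "v \<in> V"
  obtains y where "adj E ends v y"
proof -
  have "\<not> V \<subseteq> {v}"
    using card_mono[of "{v}" V] \<open>2 \<le> card V\<close> by auto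
  then obtain z where "z \<in> V" "z \<noteq> v" by blast
  then have "(v, z) \<in> (edge_rel E ends)\<^sup>*"
    using conn \<open>v \<in> V\<close> unfolding spanning_connected_def by blast
  then obtain y where "(v, y) \<in> edge_rel E ends"
    using \<open>z \<noteq> v\<close> by (cases rule: converse_rtranclE) auto
  then obtain e where "e \<in> E" "ends e = {v, y}" unfolding edge_rel_def by auto
  moreover from this have "card {v, y} = 2" using mg unfolding multigraph_def by metis
  then have "v \<noteq> y" by (cases "v = y") auto
  ultimately show ?thesis using that unfolding adj_def by blast
qed

lemma low_degree_vertex:
  assumes mg: "multigraph V E ends" and conn: "spanning_connected V E ends"
    and disjoint: "cycles_edge_disjoint E ends" and two: "2 \<le> card V"
  obtains v u w where "adj E ends v u" "adj E ends v w" "\<And>y. adj E ends v y \<Longrightarrow> y = u \<or> y = w"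
proof -
  have "finite V" using mg unfolding multigraph_def by simp
  have "V \<noteq> {}" using two by (intro notI) simp
  then obtain v0 where "v0 \<in> V" by blast
  with \<open>finite V\<close> obtain p where path: "simple_path V E ends p"
    and longest: "\<And>q. simple_path V E ends q \<Longrightarrow> length q \<le> length p"
    using longest_simple_path_exists[where E = E and ends = ends] by blast
  let ?v = "p ! 0"
  note start_adj = longest_simple_path_start_adj[OF mg path longest]
  have "?v \<in> V" using path unfolding simple_path_def by auto
  then obtain y0 where "adj E ends ?v y0"
    using spanning_connected_has_neighbour[OF mg conn two] by blast
  then obtain k0 where "0 < k0" "k0 < length p" using start_adj by blast
  then have u: "adj E ends ?v (p ! 1)" using path unfolding simple_path_def by simp
  show ?thesis
  proof (cases "\<forall>y. adj E ends ?v y \<longrightarrow> y = p ! 1")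
    case True
    then show ?thesis using that[OF u u] by blast
  next
    case False
    then obtain w where w: "adj E ends ?v w" "w \<noteq> p ! 1" by blast
    from w(1) obtain m where m: "0 < m" "m < length p" "w = p ! m" using start_adj by blast
    with w(2) have "2 \<le> m" by (cases "m = 1") auto
    have "y = p ! 1 \<or> y = w" if "adj E ends ?v y" for y
    proof -
      from that obtain k where k: "0 < k" "k < length p" "y = p ! k" using start_adj by blast
      consider "k = 1" | "k = m" | "2 \<le> k" "k < m" | "m < k" using k(1) \<open>2 \<le> m\<close> by linarith
      then show ?thesis
      proof cases
        case 3
        then show ?thesis
          using simple_path_start_no_two_chords[OF path disjoint 3 m(2)] that w(1) k m(3) by simp
      next
        case 4
        then show ?thesis
          using simple_path_start_no_two_chords[OF path disjoint \<open>2 \<le> m\<close> 4 k(2)] that w(1) k m(3)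
          by simp
      qed (simp_all add: k m)
    qed
    then show ?thesis using that[OF u w(1)] by blast
  qed
qed

lemma multigraph_edge_ends:
  assumes "multigraph V E ends" "e \<in> E" "v \<in> ends e"
  obtains y where "ends e = {v, y}" "v \<noteq> y"
proof -
  obtain p q where "ends e = {p, q}" "p \<noteq> q"
    using assms(1,2) unfolding multigraph_def card_2_iff by blast
  with assms(3) that show ?thesis by (auto simp: insert_commute)
qed

lemma low_degree_vertex_edges:
  assumes mg: "multigraph V E ends" and conn: "spanning_connected V E ends"
    and disjoint: "cycles_edge_disjoint E ends" and two: "2 \<le> card V"
    and no_parallel: "\<And>e f. e \<in> E \<Longrightarrow> f \<in> E \<Longrightarrow> ends e = ends f \<Longrightarrow> e = f"
  obtains v u w a b where "a \<in> E" "ends a = {v, u}" "b \<in> E" "ends b = {v, w}"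
    "a = b \<longleftrightarrow> u = w" "\<forall>e\<in>E - {a, b}. ends e \<subseteq> V - {v}"
proof -
  obtain v u w where vu: "adj E ends v u" and vw: "adj E ends v w"
    and degree: "\<And>y. adj E ends v y \<Longrightarrow> y = u \<or> y = w"
    using low_degree_vertex[OF mg conn disjoint two] by blast
  obtain a where a: "a \<in> E" "ends a = {v, u}" using vu unfolding adj_def by blast
  obtain b where b: "b \<in> E" "ends b = {v, w}" using vw unfolding adj_def by blast
  have "a = b \<longleftrightarrow> u = w"
  proof
    assume "a = b"
    with a(2) b(2) have "{v, u} = {v, w}" by simp
    with adj_irrefl[OF vu] show "u = w" by (simp add: doubleton_eq_iff)
  next
    assume "u = w"
    with a(2) b(2) show "a = b" using no_parallel[OF a(1) b(1)] by simp
  qed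
  moreover have "\<forall>e\<in>E - {a, b}. ends e \<subseteq> V - {v}"
  proof
    fix e assume e: "e \<in> E - {a, b}"
    have "v \<notin> ends e"
    proof
      assume "v \<in> ends e"
      then obtain y where y: "ends e = {v, y}" "v \<noteq> y"
        using multigraph_edge_ends[OF mg] e by blast
      then have "adj E ends v y" using e unfolding adj_def by blast
      then have "ends e = ends a \<or> ends e = ends b" using degree a(2) b(2) y(1) by auto
      then show False using no_parallel[of e a] no_parallel[of e b] e a(1) b(1) by blast
    qed
    then show "ends e \<subseteq> V - {v}" using mg e unfolding multigraph_def by blast
  qed
  ultimately show ?thesis using that a b by blast
qed

section \<open>Reduction\<close>

definition disc_weighted_cactus ::
    "'v set \<Rightarrow> 'e set \<Rightarrow> ('e \<Rightarrow> 'v set) \<Rightarrow> ('e \<Rightarrow> complex) \<Rightarrow> bool" where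
  "disc_weighted_cactus V E ends x \<longleftrightarrow>
     network V E ends \<and> cycles_edge_disjoint E ends \<and> (\<forall>e\<in>E. cmod (1 + x e) < 1)"

lemma disc_weighted_cactus_parallel:
  assumes dwc: "disc_weighted_cactus V E ends x"
    and ef: "e \<in> E" "f \<in> E" "e \<noteq> f" "ends e = ends f"
  shows "disc_weighted_cactus V (E - {f}) ends (x(e := (1 + x e) * (1 + x f) - 1))"
proof -
  have mg: "multigraph V E ends" and conn: "spanning_connected V E ends"
    and disjoint: "cycles_edge_disjoint E ends" and weights: "\<forall>e\<in>E. cmod (1 + x e) < 1"
    using dwc unfolding disc_weighted_cactus_def network_def by auto
  have same_ends: "(\<exists>g\<in>E - {f}. ends g = X) \<longleftrightarrow> (\<exists>g\<in>E. ends g = X)" for X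
    using ef by auto
  then have edge_rel_eq: "edge_rel (E - {f}) ends = edge_rel E ends"
    and adj_eq: "adj (E - {f}) ends = adj E ends"
    unfolding edge_rel_def adj_def by simp_all
  have "multigraph V (E - {f}) ends" using mg unfolding multigraph_def by blast
  moreover have "spanning_connected V (E - {f}) ends"
    using conn unfolding spanning_connected_def edge_rel_eq .
  moreover have "cycles_edge_disjoint (E - {f}) ends"
    using disjoint unfolding cycles_edge_disjoint_def is_cycle_def adj_eq .
  moreover have "cmod (1 + ((1 + x e) * (1 + x f) - 1)) < 1"
    using weights ef by (intro parallel_weight_in_disc) auto
  ultimately show ?thesis
    using weights unfolding disc_weighted_cactus_def network_def by simp
qed

lemma disc_weighted_cactus_pendant:
  assumes dwc: "disc_weighted_cactus V E ends x" and a: "a \<in> E" "ends a = {v, u}"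
    and others: "\<And>e. e \<in> E - {a} \<Longrightarrow> ends e \<subseteq> V - {v}"
  shows "disc_weighted_cactus (V - {v}) (E - {a}) ends x"
proof -
  have mg: "multigraph V E ends" and conn: "spanning_connected V E ends"
    and disjoint: "cycles_edge_disjoint E ends"
    using dwc unfolding disc_weighted_cactus_def network_def by auto
  have "v \<in> V" "u \<in> V - {v}"
    using mg a unfolding multigraph_def by (auto simp: card_2_iff doubleton_eq_iff)
  have "multigraph (V - {v}) (E - {a}) ends"
    using mg others \<open>u \<in> V - {v}\<close> unfolding multigraph_def by auto
  moreover have "spanning_connected (V - {v}) (E - {a}) ends"
    using spanning_connected_insert_pendant_iff[of "E - {a}" ends V v a u, OF others a(2) \<open>v \<in> V\<close>]
      conn a(1) \<open>u \<in> V - {v}\<close> by (simp add: insert_absorb)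
  moreover have "cycles_edge_disjoint (E - {a}) ends"
    by (rule cycles_edge_disjoint_mono[OF disjoint]) (auto simp: adj_def)
  ultimately show ?thesis using dwc unfolding disc_weighted_cactus_def network_def by auto
qed

lemma cycles_edge_disjoint_series:
  assumes disjoint: "cycles_edge_disjoint E ends" and ab: "a \<in> E" "b \<in> E"
    and ends_ab: "ends a = {v, u}" "ends b = {v, w}" "v \<noteq> u" "v \<noteq> w"
    and others: "\<And>e. e \<in> E - {a, b} \<Longrightarrow> ends e \<subseteq> V - {v}"
  shows "cycles_edge_disjoint (E - {a}) (ends(b := {u, w}))"
proof -
  let ?ends' = "ends(b := {u, w})"
  have transfer: "adj E ends p q"
    if pq: "adj (E - {a}) ?ends' p q" and not_uw: "{p, q} \<noteq> {u, w}" for p q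
  proof -
    obtain g where g: "g \<in> E - {a}" "?ends' g = {p, q}" "p \<noteq> q"
      using pq unfolding adj_def by blast
    moreover from g(2) not_uw have "g \<noteq> b" by (metis fun_upd_same)
    ultimately show ?thesis unfolding adj_def by (metis DiffD1 fun_upd_other)
  qed
  have isolated: "\<not> adj (E - {a}) ?ends' v q" for q
  proof
    assume "adj (E - {a}) ?ends' v q"
    then obtain g where g: "g \<in> E - {a}" "?ends' g = {v, q}" unfolding adj_def by blast
    show False
    proof (cases "g = b")
      case True
      with g(2) ends_ab(3,4) show False by (auto simp: doubleton_eq_iff)
    next
      case False
      with g have "v \<in> ends g" "g \<in> E - {a, b}" by auto
      with others show False by blast
    qed
  qed
  have "adj E ends v u" "adj E ends v w" using ab ends_ab unfolding adj_def by blast+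
  from cycles_edge_disjoint_smooth[OF disjoint transfer isolated this] show ?thesis .
qed

lemma disc_weighted_cactus_series:
  assumes dwc: "disc_weighted_cactus V E ends x" and ab: "a \<in> E" "b \<in> E" "a \<noteq> b"
    and ends_ab: "ends a = {v, u}" "ends b = {v, w}" "u \<noteq> w"
    and others: "\<And>e. e \<in> E - {a, b} \<Longrightarrow> ends e \<subseteq> V - {v}"
  shows "disc_weighted_cactus (V - {v}) (E - {a}) (ends(b := {u, w}))
    (x(b := x a * x b / (x a + x b)))"
proof -
  let ?ends' = "ends(b := {u, w})"
  have mg: "multigraph V E ends" and conn: "spanning_connected V E ends"
    and disjoint: "cycles_edge_disjoint E ends" and weights: "\<forall>e\<in>E. cmod (1 + x e) < 1"
    using dwc unfolding disc_weighted_cactus_def network_def by auto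
  have "v \<in> V" "u \<in> V - {v}" "w \<in> V - {v}"
    using mg ab ends_ab(1,2) unfolding multigraph_def by (auto simp: card_2_iff doubleton_eq_iff)
  have "multigraph (V - {v}) (E - {a}) ?ends'"
    unfolding multigraph_def
  proof (intro conjI ballI)
    show "finite (V - {v})" "V - {v} \<noteq> {}" "finite (E - {a})"
      using mg \<open>u \<in> V - {v}\<close> unfolding multigraph_def by auto
    fix e assume "e \<in> E - {a}"
    then show "?ends' e \<subseteq> V - {v}" "card (?ends' e) = 2"
      using others[of e] mg \<open>u \<in> V - {v}\<close> \<open>w \<in> V - {v}\<close> \<open>u \<noteq> w\<close>
      unfolding multigraph_def by (cases "e = b"; simp)+
  qed
  moreover have "spanning_connected (V - {v}) (E - {a}) ?ends'"
  proof -
    have "E = insert a (insert b (E - {a, b}))" "E - {a} = insert b (E - {a, b})"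
      using ab by auto
    moreover have "\<And>e. e \<in> E - {a, b} \<Longrightarrow> ?ends' e = ends e" by simp
    ultimately show ?thesis
      using spanning_connected_insert_series_iff[of "E - {a, b}" ends V v a u b w ?ends' b,
          OF others ends_ab(1,2) \<open>v \<in> V\<close> \<open>u \<in> V - {v}\<close> \<open>w \<in> V - {v}\<close>] conn
      by simp
  qed
  moreover have "cycles_edge_disjoint (E - {a}) ?ends'"
    using \<open>u \<in> V - {v}\<close> \<open>w \<in> V - {v}\<close>
    by (intro cycles_edge_disjoint_series[OF disjoint ab(1,2) ends_ab(1,2) _ _ others]) auto
  moreover have "\<forall>e\<in>E - {a}. cmod (1 + (x(b := x a * x b / (x a + x b))) e) < 1"
    using weights series_weight_in_disc(2)[of "x a" "x b"] ab by auto
  ultimately show ?thesis unfolding disc_weighted_cactus_def network_def by blast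
qed

lemma disc_weighted_cactus_reduce_simple:
  fixes V :: "'v set" and E :: "'e set" and ends :: "'e \<Rightarrow> 'v set" and x :: "'e \<Rightarrow> complex"
  assumes dwc: "disc_weighted_cactus V E ends x" and two: "2 \<le> card V"
    and no_parallel: "\<And>e f. e \<in> E \<Longrightarrow> f \<in> E \<Longrightarrow> ends e = ends f \<Longrightarrow> e = f"
  obtains V' :: "'v set" and E' :: "'e set" and ends' :: "'e \<Rightarrow> 'v set"
    and x' :: "'e \<Rightarrow> complex" and c :: complex
  where "card V' + card E' < card V + card E" "disc_weighted_cactus V' E' ends' x'" "c \<noteq> 0"
    "spanning_conn_sum V E ends x = c * spanning_conn_sum V' E' ends' x'"
proof -
  have mg: "multigraph V E ends" and conn: "spanning_connected V E ends"
    and disjoint: "cycles_edge_disjoint E ends" and weights: "\<forall>e\<in>E. cmod (1 + x e) < 1"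
    using dwc unfolding disc_weighted_cactus_def network_def by auto
  have "finite V" "finite E" using mg unfolding multigraph_def by auto
  obtain v u w a b where a: "a \<in> E" "ends a = {v, u}" and b: "b \<in> E" "ends b = {v, w}"
    and ab: "a = b \<longleftrightarrow> u = w" and others: "\<forall>e\<in>E - {a, b}. ends e \<subseteq> V - {v}"
    by (rule low_degree_vertex_edges[OF mg conn disjoint two no_parallel])
  have "v \<in> V" using mg a unfolding multigraph_def by blast
  then have smaller: "card (V - {v}) + card (E - {a}) < card V + card E"
    using card_Diff1_less[OF \<open>finite V\<close>] card_Diff1_less[OF \<open>finite E\<close> a(1)]
    by (metis add_strict_mono)
  show ?thesis
  proof (cases "u = w")
    case True
    with ab others have others_a: "\<And>e. e \<in> E - {a} \<Longrightarrow> ends e \<subseteq> V - {v}" by auto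
    have "cmod (1 + x a) < 1" using weights a(1) by blast
    then have "x a \<noteq> 0" by (intro notI) simp
    from smaller disc_weighted_cactus_pendant[of V E ends x a v u, OF dwc a others_a] this
      spanning_conn_sum_pendant[of V E ends a v u x, OF mg a others_a]
    show ?thesis by (rule that)
  next
    case False
    with ab have "a \<noteq> b" by simp
    have nonzero: "x a + x b \<noteq> 0"
      using weights a(1) b(1) by (intro series_weight_in_disc(1)) auto
    from smaller
      disc_weighted_cactus_series[of V E ends x a b v u w, OF dwc a(1) b(1) \<open>a \<noteq> b\<close> a(2) b(2)
        False others[rule_format]]
      nonzero
      spanning_conn_sum_series[of V E ends a b v u w x, OF mg a(1) b(1) \<open>a \<noteq> b\<close> a(2) b(2)
        others[rule_format] nonzero]
    show ?thesis by (rule that)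
  qed
qed

lemma disc_weighted_cactus_reduce:
  fixes V :: "'v set" and E :: "'e set" and ends :: "'e \<Rightarrow> 'v set" and x :: "'e \<Rightarrow> complex"
  assumes dwc: "disc_weighted_cactus V E ends x" and two: "2 \<le> card V"
  obtains V' :: "'v set" and E' :: "'e set" and ends' :: "'e \<Rightarrow> 'v set"
    and x' :: "'e \<Rightarrow> complex" and c :: complex
  where "card V' + card E' < card V + card E" "disc_weighted_cactus V' E' ends' x'" "c \<noteq> 0"
    "spanning_conn_sum V E ends x = c * spanning_conn_sum V' E' ends' x'"
proof (cases "\<exists>e\<in>E. \<exists>f\<in>E. e \<noteq> f \<and> ends e = ends f")
  case True
  then obtain e f where ef: "e \<in> E" "f \<in> E" "e \<noteq> f" "ends e = ends f" by blast
  have "finite E" using dwc unfolding disc_weighted_cactus_def network_def multigraph_def by simp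
  show ?thesis
  proof (rule that)
    show "card V + card (E - {f}) < card V + card E"
      using card_Diff1_less[OF \<open>finite E\<close> ef(2)] by simp
    show "disc_weighted_cactus V (E - {f}) ends (x(e := (1 + x e) * (1 + x f) - 1))"
      using dwc ef by (rule disc_weighted_cactus_parallel)
    show "spanning_conn_sum V E ends x
        = 1 * spanning_conn_sum V (E - {f}) ends (x(e := (1 + x e) * (1 + x f) - 1))"
      using spanning_conn_sum_parallel[OF \<open>finite E\<close> ef] by simp
  qed simp
next
  case False
  then have no_parallel: "e = f" if "e \<in> E" "f \<in> E" "ends e = ends f" for e f
    using that by blast
  show ?thesis using disc_weighted_cactus_reduce_simple[OF dwc two no_parallel] that by blast
qed

lemma spanning_conn_sum_nonzero:
  fixes V :: "'v set" and E :: "'e set" and ends :: "'e \<Rightarrow> 'v set" and x :: "'e \<Rightarrow> complex"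
  shows "disc_weighted_cactus V E ends x \<Longrightarrow> spanning_conn_sum V E ends x \<noteq> 0"
proof (induction "card V + card E" arbitrary: V E ends x rule: less_induct)
  case less
  show ?case
  proof (cases "2 \<le> card V")
    case True
    show ?thesis
    proof (rule disc_weighted_cactus_reduce[OF less.prems True])
      fix V' :: "'v set" and E' :: "'e set" and ends' :: "'e \<Rightarrow> 'v set"
        and x' :: "'e \<Rightarrow> complex" and c :: complex
      assume "card V' + card E' < card V + card E" "disc_weighted_cactus V' E' ends' x'"
        and "c \<noteq> 0" "spanning_conn_sum V E ends x = c * spanning_conn_sum V' E' ends' x'"
      with less.hyps[of V' E' ends' x'] show ?thesis by simp
    qed
  next
    case False
    have mg: "multigraph V E ends"
      using less.prems unfolding disc_weighted_cactus_def network_def by simp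
    then have "0 < card V" unfolding multigraph_def by (simp add: card_gt_0_iff)
    with False have "card V = 1" by linarith
    then obtain v where V: "V = {v}" by (rule card_1_singletonE)
    have "E = {}"
    proof
      show "E \<subseteq> {}"
      proof
        fix e assume "e \<in> E"
        with mg V have "ends e \<subseteq> {v}" "card (ends e) = 2" unfolding multigraph_def by auto
        then show "e \<in> {}" using card_mono[of "{v}" "ends e"] by simp
      qed
    qed simp
    with V show ?thesis by (simp add: spanning_conn_sum_singleton)
  qed
qed

theorem corollary3p4:
  fixes V :: "'v set" and E :: "'e set" and ends :: "'e \<Rightarrow> 'v set"
  assumes "network V E ends"
    and "underlying_is_cactus V E ends"
    and "poly (reliability_poly V E ends) q = 0"
  shows "cmod q \<le> 1"
proof (rule ccontr)
  assume "\<not> cmod q \<le> 1"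
  then have "1 < cmod q" "q \<noteq> 0" by auto
  moreover have "1 + (1 - q) / q = inverse q" using \<open>q \<noteq> 0\<close> by (simp add: field_simps)
  ultimately have "cmod (1 + (1 - q) / q) < 1" by (simp add: norm_inverse inverse_less_1_iff)
  have "finite E" using assms(1) unfolding network_def multigraph_def by simp
  \<comment> \<open>only the cycle condition of the cactus is used: connectivity is part of \<open>network\<close>\<close>
  from \<open>cmod (1 + (1 - q) / q) < 1\<close> assms(1,2)
  have "disc_weighted_cactus V E ends (\<lambda>_. (1 - q) / q)"
    unfolding disc_weighted_cactus_def underlying_is_cactus_def cycles_edge_disjoint_def by blast
  then have "spanning_conn_sum V E ends (\<lambda>_. (1 - q) / q) \<noteq> 0"
    by (rule spanning_conn_sum_nonzero)
  then have "poly (reliability_poly V E ends) q \<noteq> 0"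
    using poly_reliability_poly_eq_spanning_conn_sum[OF \<open>finite E\<close> \<open>q \<noteq> 0\<close>, of V ends] \<open>q \<noteq> 0\<close>
    by simp
  with assms(3) show False by simp
qed

end
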